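(* In the construction below, for every directed path $\langle(u_0,0),(u_1,1),\dots,(u_K,K)\rangle$ in $\mathcal D$ from the root to level $K$, $$\sum_{k=0}^{K-1}\log\big(1/\theta_{(u_k,k)(u_{k+1},k+1)}\big)\le 3\log n.$$ In particular $\Delta_I(\hat{\mathcal D})\le3\log n$.
   Context: Construction. Let $(X,d)$ be a metric space with $n=|X|\ge2$ and $\mathrm{diam}(X)=1$. For $S\subseteq X$, $r\ge0$: $B_X(S,r):=\{x\in X:\exists s\in S,\ d(x,s)\le r\}$ and $B_X(x,r):=B_X(\{x\},r)$. Let $\varepsilon_0:=\min\{d(x,y):x\ne y\}$, $\tau:=12$, $K:=1+\lceil\log_\tau(1/\varepsilon_0)\rceil$. For $\eta>0$ the greedy $\eta$-net is built as: $N_0=\emptyset$; for $j\ge1$, $S_j:=X\setminus B_X(N_{j-1},\eta)$; if $S_j=\emptyset$ output $N_{j-1}$; else pick $x_j\in S_j$ maximizing $|B_X(x,\eta/3)|$ and set $N_j=N_{j-1}\cup\{x_j\}$. For $k=0,\dots,K$ let $U_k$ be the greedy $\tau^{-k}$-net (so $U_0$ is a single point and $U_K=X$). For $k<K$, $A_k$ is the set of pairs $(u,u')\in U_k\times U_{k+1}$ with (i) $d(u,u')\le4\tau^{-k}$ and (ii) $|B_X(u,\tau^{-k}/3)|\ge\max\{|B_X(w,\tau^{-k}/3)|:w\in B_X(u',6\tau^{-(k+1)})\}$. The directed graph $\mathcal D$ has vertex set $\{(u,k):u\in U_k,\ 0\le k\le K\}$, arcs $((u,k),(u',k+1))$ for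 $(u,u')\in A_k$, root $(u,0)$ with $U_0=\{u\}$, and the vertices $(x,K)$ are identified with $x\in X$. Arc weights: $\omega_{(u,k)(u',k+1)}:=10\tau^{-k}$ and $\theta_{(u,k)(u',k+1)}:=|B_X(u',\tau^{-(k+1)}/3)|\big/\sum_{w:(u,w)\in A_k}|B_X(w,\tau^{-(k+1)}/3)|$. $\hat{\mathcal D}=(\mathcal D,\omega,\theta)$; $\Delta_I(\hat{\mathcal D})$ is the maximum over root-to-level-$K$ paths $\gamma$ of $\log(1/\prod_{a\in\gamma}\theta_a)$. *)

theory Defs
  imports Complex_Main
begin

definition metric_on :: "'a set \<Rightarrow> ('a \<Rightarrow> 'a \<Rightarrow> real) \<Rightarrow> bool" where
  "metric_on X d \<longleftrightarrow>
     (\<forall>x\<in>X. d x x = 0) \<and>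
     (\<forall>x\<in>X. \<forall>y\<in>X. x \<noteq> y \<longrightarrow> d x y > 0) \<and>
     (\<forall>x\<in>X. \<forall>y\<in>X. d x y = d y x) \<and>
     (\<forall>x\<in>X. \<forall>y\<in>X. \<forall>z\<in>X. d x z \<le> d x y + d y z)"

definition diam :: "'a set \<Rightarrow> ('a \<Rightarrow> 'a \<Rightarrow> real) \<Rightarrow> real" where
  "diam X d = Max {d x y | x y. x \<in> X \<and> y \<in> X}"

definition ballX :: "'a set \<Rightarrow> ('a \<Rightarrow> 'a \<Rightarrow> real) \<Rightarrow> 'a set \<Rightarrow> real \<Rightarrow> 'a set" where
  "ballX X d S r = {x \<in> X. \<exists>s\<in>S. d x s \<le> r}"

definition eps0 :: "'a set \<Rightarrow> ('a \<Rightarrow> 'a \<Rightarrow> real) \<Rightarrow> real" where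
  "eps0 X d = Min {d x y | x y. x \<in> X \<and> y \<in> X \<and> x \<noteq> y}"

definition tau :: real where "tau = 12"

definition Klev :: "'a set \<Rightarrow> ('a \<Rightarrow> 'a \<Rightarrow> real) \<Rightarrow> nat" where
  "Klev X d = 1 + nat \<lceil>log tau (1 / eps0 X d)\<rceil>"

text \<open>N is an output of the greedy eta-net procedure (for some admissible choice
  of the maximizers when there are ties): xs lists x_1, x_2, ... in order.\<close>
definition greedy_net :: "'a set \<Rightarrow> ('a \<Rightarrow> 'a \<Rightarrow> real) \<Rightarrow> real \<Rightarrow> 'a set \<Rightarrow> bool" where
  "greedy_net X d \<eta> N \<longleftrightarrow>
     (\<exists>xs. N = set xs \<and>
        (\<forall>j < length xs.
           xs ! j \<in> X - ballX X d (set (take j xs)) \<eta> \<and>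
           (\<forall>y \<in> X - ballX X d (set (take j xs)) \<eta>.
               card (ballX X d {y} (\<eta>/3)) \<le> card (ballX X d {xs ! j} (\<eta>/3)))) \<and>
        X - ballX X d (set xs) \<eta> = {})"

definition arcs :: "'a set \<Rightarrow> ('a \<Rightarrow> 'a \<Rightarrow> real) \<Rightarrow> (nat \<Rightarrow> 'a set) \<Rightarrow> nat \<Rightarrow> ('a \<times> 'a) set" where
  "arcs X d U k = {(u, u'). u \<in> U k \<and> u' \<in> U (Suc k) \<and>
      d u u' \<le> 4 * tau powi (- int k) \<and>
      (\<forall>w \<in> ballX X d {u'} (6 * tau powi (- int (Suc k))).
         card (ballX X d {w} (tau powi (- int k) / 3)) \<le> card (ballX X d {u} (tau powi (- int k) / 3)))}"

definition theta :: "'a set \<Rightarrow> ('a \<Rightarrow> 'a \<Rightarrow> real) \<Rightarrow> (nat \<Rightarrow> 'a set) \<Rightarrow> nat \<Rightarrow> 'a \<Rightarrow> 'a \<Rightarrow> real" where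
  "theta X d U k u u' =
     real (card (ballX X d {u'} (tau powi (- int (Suc k)) / 3))) /
     (\<Sum>w \<in> {w. (u, w) \<in> arcs X d U k}. real (card (ballX X d {w} (tau powi (- int (Suc k)) / 3))))"

end

theory Submission
  imports Defs
begin

text \<open>Let c_k = mass k count the points within tau^(-k)/3 of u_k and let S_k = children_mass k
  be the denominator of theta at level k, so that log (1/theta_k) = log S_k - log c_(k+1). Net
  points of level k+1 are more than tau^(-k-1) apart, so the balls summed in S_k are disjoint
  and S_k <= n. They all lie within tau^(-k+2)/3 of u_k, and u_k is within 6 tau^(-k+1) of
  u_(k-1), so condition (ii) for the arc (u_(k-2), u_(k-1)) gives S_k <= c_(k-2). The sum
  therefore telescopes to log S_0 + log S_1 + log c_0 <= 3 log n.\<close>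

abbreviation tau_scale :: "nat \<Rightarrow> real" where
  "tau_scale k \<equiv> tau powi (- int k)"

lemma tau_scale_eq: "tau_scale k = 1 / 12 ^ k"
  by (simp add: tau_def power_int_minus divide_inverse)

lemma tau_scale_pos: "tau_scale k > 0"
  by (simp add: tau_scale_eq)

lemma metric_on_refl: "metric_on X d \<Longrightarrow> x \<in> X \<Longrightarrow> d x x = 0"
  unfolding metric_on_def by blast

lemma metric_on_sym: "metric_on X d \<Longrightarrow> x \<in> X \<Longrightarrow> y \<in> X \<Longrightarrow> d x y = d y x"
  unfolding metric_on_def by blast

lemma metric_on_triangle:
  "metric_on X d \<Longrightarrow> x \<in> X \<Longrightarrow> y \<in> X \<Longrightarrow> z \<in> X \<Longrightarrow> d x z \<le> d x y + d y z"
  unfolding metric_on_def by blast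

lemma mem_ballX_singleton: "x \<in> ballX X d {w} r \<longleftrightarrow> x \<in> X \<and> d x w \<le> r"
  by (simp add: ballX_def)

lemma ballX_subset: "ballX X d S r \<subseteq> X"
  by (auto simp: ballX_def)

lemma ballX_mono: "r \<le> r' \<Longrightarrow> ballX X d S r \<subseteq> ballX X d S r'"
  by (force simp: ballX_def)

lemma finite_ballX: "finite X \<Longrightarrow> finite (ballX X d S r)"
  by (rule finite_subset[OF ballX_subset])

lemma centre_in_ballX: "metric_on X d \<Longrightarrow> x \<in> X \<Longrightarrow> r \<ge> 0 \<Longrightarrow> x \<in> ballX X d {x} r"
  by (simp add: mem_ballX_singleton metric_on_refl)

lemma card_ballX_pos:
  "finite X \<Longrightarrow> metric_on X d \<Longrightarrow> x \<in> X \<Longrightarrow> r \<ge> 0 \<Longrightarrow> card (ballX X d {x} r) > 0"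
  by (metis card_gt_0_iff centre_in_ballX empty_iff finite_ballX)

lemma ballX_subset_ballX:
  assumes "metric_on X d" "w \<in> X" "x \<in> X" "d w x \<le> a"
  shows "ballX X d {w} b \<subseteq> ballX X d {x} (a + b)"
proof
  fix y assume "y \<in> ballX X d {w} b"
  then have y: "y \<in> X" "d y w \<le> b" by (simp_all add: mem_ballX_singleton)
  have "d y x \<le> d y w + d w x" using metric_on_triangle[OF assms(1) y(1) assms(2,3)] .
  then show "y \<in> ballX X d {x} (a + b)" using assms y by (simp add: mem_ballX_singleton)
qed

lemma sum_card_ballX_separated:
  assumes "finite X" "metric_on X d" "W \<subseteq> X"
    and sep: "\<And>x y. x \<in> W \<Longrightarrow> y \<in> W \<Longrightarrow> x \<noteq> y \<Longrightarrow> 2 * r < d x y"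
  shows "(\<Sum>w\<in>W. card (ballX X d {w} r)) = card (\<Union>w\<in>W. ballX X d {w} r)"
proof (rule card_UN_disjoint[symmetric])
  show "finite W" using finite_subset[OF assms(3,1)] .
  show "\<forall>w\<in>W. finite (ballX X d {w} r)" using finite_ballX[OF assms(1)] by blast
  show "\<forall>x\<in>W. \<forall>y\<in>W. x \<noteq> y \<longrightarrow> ballX X d {x} r \<inter> ballX X d {y} r = {}"
  proof (intro ballI impI equals0I)
    fix x y z assume xy: "x \<in> W" "y \<in> W" "x \<noteq> y"
      and "z \<in> ballX X d {x} r \<inter> ballX X d {y} r"
    then have z: "z \<in> X" "d z x \<le> r" "d z y \<le> r" by (simp_all add: mem_ballX_singleton)
    have "x \<in> X" "y \<in> X" using xy assms(3) by blast+
    then have "d x y \<le> d x z + d z y" "d x z = d z x"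
      using metric_on_triangle[OF assms(2)] metric_on_sym[OF assms(2)] z(1) by blast+
    then show False using sep[OF xy] z by linarith
  qed
qed

lemma greedy_net_subset: "greedy_net X d \<eta> N \<Longrightarrow> N \<subseteq> X"
  unfolding greedy_net_def by (auto simp: in_set_conv_nth)

lemma greedy_net_separated:
  assumes "greedy_net X d \<eta> N" "metric_on X d" "x \<in> N" "y \<in> N" "x \<noteq> y"
  shows "\<eta> < d x y"
proof -
  obtain xs where N: "N = set xs"
    and fresh: "\<And>j. j < length xs \<Longrightarrow> xs ! j \<in> X - ballX X d (set (take j xs)) \<eta>"
    using assms(1) unfolding greedy_net_def by blast
  have later_far: "\<eta> < d (xs ! j) (xs ! i)" if "i < j" "j < length xs" for i j
  proof -
    have "xs ! i \<in> set (take j xs)" using that by (auto simp: in_set_conv_nth)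
    then show ?thesis using fresh[OF that(2)] unfolding ballX_def by force
  qed
  obtain i j where ij: "i < length xs" "j < length xs" "xs ! i = x" "xs ! j = y"
    using assms(3,4) N by (auto simp: in_set_conv_nth)
  have "x \<in> X" "y \<in> X" using assms(3,4) greedy_net_subset[OF assms(1)] by blast+
  then have "d x y = d y x" by (rule metric_on_sym[OF assms(2)])
  then show ?thesis
    using later_far[of i j] later_far[of j i] ij assms(5) by (cases i j rule: linorder_cases) auto
qed

lemma sum_diff_lag_two_le:
  fixes s a :: "nat \<Rightarrow> real"
  assumes s_le: "\<And>k. k < K \<Longrightarrow> s k \<le> L"
    and s_lag: "\<And>k. k + 2 < K \<Longrightarrow> s (k + 2) \<le> a k"
    and a_nonneg: "\<And>k. k \<le> K \<Longrightarrow> 0 \<le> a k"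
    and "a 0 \<le> L"
  shows "(\<Sum>k<K. s k - a (Suc k)) \<le> 3 * L"
proof -
  have partial: "(\<Sum>k<n + 2. s k - a (Suc k)) \<le> s 0 + s 1 + a 0 - (a n + a (n + 1) + a (n + 2))"
    if "n + 2 \<le> K" for n
    using that
  proof (induction n)
    case 0
    then show ?case by (simp add: numeral_2_eq_2)
  next
    case (Suc n)
    then have "s (n + 2) \<le> a n" using s_lag by simp
    then show ?case using Suc by (simp add: numeral_2_eq_2)
  qed
  show ?thesis
  proof (cases "2 \<le> K")
    case True
    define n where "n = K - 2"
    have K: "K = n + 2" using True by (simp add: n_def)
    show ?thesis
      using partial[of n] s_le[of 0] s_le[of 1] a_nonneg[of n] a_nonneg[of "n + 1"]
        a_nonneg[of "n + 2"] \<open>a 0 \<le> L\<close> unfolding K by simp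
  next
    case False
    then consider "K = 0" | "K = 1" by linarith
    then show ?thesis using s_le[of 0] a_nonneg[of 0] a_nonneg[of 1] \<open>a 0 \<le> L\<close> by cases auto
  qed
qed

locale separated_nets_path =
  fixes X :: "'a set" and d :: "'a \<Rightarrow> 'a \<Rightarrow> real"
    and U :: "nat \<Rightarrow> 'a set" and u :: "nat \<Rightarrow> 'a" and K :: nat
  assumes finite_X: "finite X"
    and metric: "metric_on X d"
    and nets_subset: "\<And>k. k \<le> K \<Longrightarrow> U k \<subseteq> X"
    and nets_separated:
      "\<And>k x y. k \<le> K \<Longrightarrow> x \<in> U k \<Longrightarrow> y \<in> U k \<Longrightarrow> x \<noteq> y \<Longrightarrow> tau_scale k < d x y"
    and path_in_nets: "\<And>k. k \<le> K \<Longrightarrow> u k \<in> U k"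
    and path_arcs: "\<And>k. k < K \<Longrightarrow> (u k, u (Suc k)) \<in> arcs X d U k"
begin

definition children :: "nat \<Rightarrow> 'a set" where
  "children k = {w. (u k, w) \<in> arcs X d U k}"

definition mass :: "nat \<Rightarrow> real" where
  "mass k = real (card (ballX X d {u k} (tau_scale k / 3)))"

definition children_mass :: "nat \<Rightarrow> real" where
  "children_mass k = (\<Sum>w\<in>children k. real (card (ballX X d {w} (tau_scale (Suc k) / 3))))"

lemma theta_path: "theta X d U k (u k) (u (Suc k)) = mass (Suc k) / children_mass k"
  by (simp add: theta_def mass_def children_mass_def children_def)

lemma path_in_X: "k \<le> K \<Longrightarrow> u k \<in> X"
  using nets_subset path_in_nets by blast

lemma children_subset: "k < K \<Longrightarrow> children k \<subseteq> X"
  using nets_subset[of "Suc k"] by (auto simp: children_def arcs_def)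

lemma mass_pos: "k \<le> K \<Longrightarrow> 0 < mass k"
  unfolding mass_def using card_ballX_pos[OF finite_X metric path_in_X] tau_scale_pos[of k]
  by simp

lemma mass_le_card: "mass k \<le> card X"
  unfolding mass_def using card_mono[OF finite_X ballX_subset] by simp

lemma children_mass_eq_card:
  assumes "k < K"
  shows "children_mass k = card (\<Union>w\<in>children k. ballX X d {w} (tau_scale (Suc k) / 3))"
proof -
  have "(\<Sum>w\<in>children k. card (ballX X d {w} (tau_scale (Suc k) / 3)))
      = card (\<Union>w\<in>children k. ballX X d {w} (tau_scale (Suc k) / 3))"
  proof (rule sum_card_ballX_separated[OF finite_X metric children_subset[OF assms]])
    fix x y assume "x \<in> children k" "y \<in> children k" "x \<noteq> y"
    then show "2 * (tau_scale (Suc k) / 3) < d x y"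
      using nets_separated[of "Suc k" x y] assms tau_scale_pos[of "Suc k"]
      by (auto simp: children_def arcs_def)
  qed
  then show ?thesis unfolding children_mass_def by (metis of_nat_sum)
qed

lemma children_mass_le_card: "k < K \<Longrightarrow> children_mass k \<le> card X"
  using children_mass_eq_card card_mono[OF finite_X] ballX_subset
  by (metis (no_types, lifting) UN_least of_nat_le_iff)

lemma mass_Suc_le_children_mass:
  assumes "k < K"
  shows "mass (Suc k) \<le> children_mass k"
proof -
  have child: "u (Suc k) \<in> children k" using path_arcs[OF assms] by (simp add: children_def)
  have "finite (children k)" using finite_subset[OF children_subset[OF assms] finite_X] .
  then show ?thesis
    unfolding mass_def children_mass_def by (rule member_le_sum[OF child, rotated]) simp
qed

text \<open>The radii fit because 4 tau^(-k-2) + tau^(-k-3)/3 <= tau^(-k)/3.\<close>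

lemma children_mass_le_mass:
  assumes "k + 2 < K"
  shows "children_mass (k + 2) \<le> mass k"
proof -
  let ?v = "u (k + 2)"
  have v: "?v \<in> X" and v': "u (Suc k) \<in> X" using assms path_in_X by simp_all
  have children_near: "(\<Union>w\<in>children (k + 2). ballX X d {w} (tau_scale (k + 3) / 3))
      \<subseteq> ballX X d {?v} (tau_scale k / 3)"
  proof (intro UN_least)
    fix w assume w: "w \<in> children (k + 2)"
    then have "w \<in> X" "d w ?v \<le> 4 * tau_scale (k + 2)"
      using children_subset[of "k + 2"] assms metric_on_sym[OF metric _ v]
      by (auto simp: children_def arcs_def)
    then have "ballX X d {w} (tau_scale (k + 3) / 3)
        \<subseteq> ballX X d {?v} (4 * tau_scale (k + 2) + tau_scale (k + 3) / 3)"
      using ballX_subset_ballX[OF metric _ v] by blast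
    also have "\<dots> \<subseteq> ballX X d {?v} (tau_scale k / 3)"
      by (rule ballX_mono) (unfold tau_scale_eq, simp add: field_simps power_add)
    finally show "ballX X d {w} (tau_scale (k + 3) / 3) \<subseteq> ballX X d {?v} (tau_scale k / 3)" .
  qed
  have "d (u (Suc k)) ?v \<le> 4 * tau_scale (Suc k)"
    using path_arcs[of "Suc k"] assms by (simp add: arcs_def numeral_2_eq_2)
  then have "?v \<in> ballX X d {u (Suc k)} (6 * tau_scale (Suc k))"
    using v v' tau_scale_pos[of "Suc k"] metric_on_sym[OF metric v v']
    by (simp add: mem_ballX_singleton)
  then have "card (ballX X d {?v} (tau_scale k / 3)) \<le> mass k"
    using path_arcs[of k] assms by (simp add: arcs_def mass_def)
  moreover have "children_mass (k + 2) \<le> card (ballX X d {?v} (tau_scale k / 3))"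
    using children_mass_eq_card[of "k + 2"] assms card_mono[OF finite_ballX[OF finite_X] children_near]
    by (simp add: numeral_3_eq_3 numeral_2_eq_2)
  ultimately show ?thesis by linarith
qed

lemma ln_inv_theta_path:
  assumes "k < K"
  shows "ln (1 / theta X d U k (u k) (u (Suc k))) = ln (children_mass k) - ln (mass (Suc k))"
  using mass_pos[of "Suc k"] mass_Suc_le_children_mass[OF assms] assms
  by (simp add: theta_path ln_div)

lemma sum_ln_inv_theta_path_le:
  "(\<Sum>k<K. ln (1 / theta X d U k (u k) (u (Suc k)))) \<le> 3 * ln (card X)"
proof -
  have children_mass_pos: "k < K \<Longrightarrow> 0 < children_mass k" for k
    using mass_pos[of "Suc k"] mass_Suc_le_children_mass[of k] by simp
  have "(\<Sum>k<K. ln (1 / theta X d U k (u k) (u (Suc k))))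
      = (\<Sum>k<K. ln (children_mass k) - ln (mass (Suc k)))"
    by (simp add: ln_inv_theta_path)
  also have "\<dots> \<le> 3 * ln (card X)"
  proof (rule sum_diff_lag_two_le)
    show "ln (children_mass k) \<le> ln (card X)" if "k < K" for k
      using children_mass_pos[OF that] children_mass_le_card[OF that] by simp
    show "ln (children_mass (k + 2)) \<le> ln (mass k)" if "k + 2 < K" for k
      using children_mass_pos[of "k + 2"] children_mass_le_mass[OF that] that by simp
    show "0 \<le> ln (mass k)" if "k \<le> K" for k
      using that mass_pos[of k] by (simp add: mass_def)
    show "ln (mass 0) \<le> ln (card X)"
      using mass_pos[of 0] mass_le_card[of 0] by simp
  qed
  finally show ?thesis .
qed

end

theorem lemma3p5:
  fixes X :: "'a set" and d :: "'a \<Rightarrow> 'a \<Rightarrow> real"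
    and U :: "nat \<Rightarrow> 'a set" and u :: "nat \<Rightarrow> 'a"
  assumes "finite X" and "card X \<ge> 2"
    and "metric_on X d"
    and "diam X d = 1"
    and "\<And>k. k \<le> Klev X d \<Longrightarrow> greedy_net X d (tau powi (- int k)) (U k)"
    and "\<And>k. k \<le> Klev X d \<Longrightarrow> u k \<in> U k"
    and "\<And>k. k < Klev X d \<Longrightarrow> (u k, u (Suc k)) \<in> arcs X d U k"
  shows "(\<Sum>k < Klev X d. ln (1 / theta X d U k (u k) (u (Suc k)))) \<le> 3 * ln (real (card X))"
proof -
  interpret separated_nets_path X d U u "Klev X d"
  proof
    show "U k \<subseteq> X" if "k \<le> Klev X d" for k
      using greedy_net_subset assms(5)[OF that] .
    show "tau_scale k < d x y" if "k \<le> Klev X d" "x \<in> U k" "y \<in> U k" "x \<noteq> y" for k x y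
      using greedy_net_separated[OF assms(5) assms(3)] that .
  qed (use assms in simp_all)
  show ?thesis by (rule sum_ln_inv_theta_path_le)
qed

end
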